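(* Let $\omega_p\in[0,\pi]$ and $\theta_p\in\mathbb{R}$. (I) If $\omega_p\in(0,\pi)$, then $\sup_{f\in\mathbb{AP}_{\omega_p,\theta_p}}\theta_f'(\omega_p)=-\left|\frac{\sin\theta_p}{\sin\omega_p}\right|$. (II) If $\omega_p\in\{0,\pi\}$ and $\theta_p\in\{0,\pi\}$ (mod $2\pi$), then $\sup_{f\in\mathbb{AP}_{\omega_p,\theta_p}}\theta_f'(\omega_p)=0$. When the supremum is zero it is attained by $f(z)=1$ or $f(z)=-1$; when it is nonzero it is attained by a first-order all-pass function $f(z)=\pm\frac{az+1}{z+a}$ with a suitable sign and $|a|<1$ chosen so that $\theta_f(\omega_p)=\theta_p$ (mod $2\pi$).
   Context: $\mathbb{D}$ is the open unit disk. $\mathcal{RH}_\infty$: proper real-rational functions with all poles in $\mathbb{D}$, with $\|f\|_{H_\infty}=\sup_{\omega\in(-\pi,\pi]}|f(e^{j\omega})|$. $\theta_f(\omega):=\angle f(e^{j\omega})$ is a continuous choice of argument and $\theta_f'$ its derivative in $\omega$. $\mathbb{RF}_{\omega_p,\theta_p}:=\{f\in\mathcal{RH}_\infty:\ \|f\|_{H_\infty}=|f(e^{j\omega_p})|=1,\ \theta_f(\omega_p)=\theta_p\ (\mathrm{mod}\ 2\pi)\}$. $\mathbb{AP}$ is the set of stable real-rational all-pass functions with unit gain, i.e. $f\in\mathcal{RH}_\infty$ with $|f(e^{j\omega})|=1$ for all $\omega$; $\mathbb{AP}_{\omega_p,\theta_p}:=\mathbb{AP}\cap\mathbb{RF}_{\omega_p,\theta_p}$.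 *)

theory Defs
  imports "HOL-Analysis.Analysis" "HOL-Computational_Algebra.Polynomial"
begin

definition RHinf :: "(complex \<Rightarrow> complex) set" where
  "RHinf = {f. \<exists>p q :: real poly. q \<noteq> 0 \<and> degree p \<le> degree q \<and>
      (\<forall>z. poly (map_poly complex_of_real q) z = 0 \<longrightarrow> norm z < 1) \<and>
      (\<forall>z. poly (map_poly complex_of_real q) z \<noteq> 0 \<longrightarrow>
           f z = poly (map_poly complex_of_real p) z / poly (map_poly complex_of_real q) z)}"

definition hinf_norm :: "(complex \<Rightarrow> complex) \<Rightarrow> real" where
  "hinf_norm f = (SUP \<omega>\<in>{-pi<..pi}. norm (f (cis \<omega>)))"

definition phase :: "(complex \<Rightarrow> complex) \<Rightarrow> real \<Rightarrow> real" where
  "phase f = (SOME \<theta>. continuous_on UNIV \<theta> \<and>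
       (\<forall>\<omega>. f (cis \<omega>) = complex_of_real (norm (f (cis \<omega>))) * cis (\<theta> \<omega>)))"

definition phase_deriv :: "(complex \<Rightarrow> complex) \<Rightarrow> real \<Rightarrow> real" where
  "phase_deriv f \<omega> = deriv (phase f) \<omega>"

definition RF :: "real \<Rightarrow> real \<Rightarrow> (complex \<Rightarrow> complex) set" where
  "RF \<omega>p \<theta>p = {f \<in> RHinf. hinf_norm f = norm (f (cis \<omega>p)) \<and> norm (f (cis \<omega>p)) = 1 \<and>
      (\<exists>k::int. phase f \<omega>p = \<theta>p + 2 * pi * of_int k)}"

definition AP :: "(complex \<Rightarrow> complex) set" where
  "AP = {f \<in> RHinf. \<forall>\<omega>. norm (f (cis \<omega>)) = 1}"

definition AP_at :: "real \<Rightarrow> real \<Rightarrow> (complex \<Rightarrow> complex) set" where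
  "AP_at \<omega>p \<theta>p = AP \<inter> RF \<omega>p \<theta>p"

end

theory Submission
  imports Defs "HOL-Complex_Analysis.Complex_Analysis" "HOL-Library.Real_Mod"
begin

text \<open>For an all-pass \<open>f\<close> the reflection \<open>G w = f (1 / w)\<close> is holomorphic on a neighbourhood
  of the closed disk, unimodular on the circle and real-symmetric. The Schwarz--Pick inequality
  at the symmetric pair \<open>s \<eta>\<close>, \<open>s cnj \<eta>\<close>, in the limit \<open>s \<rightarrow> 1\<close>, gives a
  Julia--Caratheodory type bound at the boundary point \<open>\<eta> = cis (- \<omega>)\<close>: the phase derivative
  \<open>- Re (cnj (G \<eta>) * deriv G \<eta> * \<eta>)\<close> is at most \<open>- |1 - cnj (f (cis \<omega>))\<^sup>2| / |1 - cis (2 \<omega>)|\<close>,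
  which equals \<open>- |sin \<theta>| / |sin \<omega>|\<close> when \<open>f (cis \<omega>) = cis \<theta>\<close>.\<close>

lemma Moebius_denominator_nonzero:
  fixes w z :: complex
  assumes "norm w < 1" "norm z \<le> 1"
  shows "1 - cnj w * z \<noteq> 0"
proof
  assume "1 - cnj w * z = 0"
  then have "norm w * norm z = 1"
    by (metis complex_mod_cnj norm_mult norm_one right_minus_eq)
  moreover have "norm w * norm z \<le> norm w"
    using assms(2) by (simp add: mult_left_le)
  ultimately show False using assms(1) by simp
qed

lemma one_minus_norm_Moebius_squared:
  fixes w z :: complex
  assumes "norm w < 1" "norm z \<le> 1"
  shows "1 - (norm (Moebius_function 0 w z))\<^sup>2 =
     (1 - (norm w)\<^sup>2) * (1 - (norm z)\<^sup>2) / (norm (1 - cnj w * z))\<^sup>2"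
proof -
  have "(norm (1 - cnj w * z))\<^sup>2 - (norm (z - w))\<^sup>2 = (1 - (norm w)\<^sup>2) * (1 - (norm z)\<^sup>2)"
    unfolding cmod_power2 by (simp add: algebra_simps power2_eq_square)
  then show ?thesis
    using Moebius_denominator_nonzero[OF assms]
    by (simp add: Moebius_function_simple norm_divide power_divide field_simps)
qed

lemma Schwarz_Pick_Moebius:
  fixes G :: "complex \<Rightarrow> complex"
  assumes hol: "G holomorphic_on ball 0 1" and G: "G ` ball 0 1 \<subseteq> ball 0 1"
    and w1: "norm w1 < 1" and w2: "norm w2 < 1"
  shows "norm (Moebius_function 0 (G w1) (G w2)) \<le> norm (Moebius_function 0 w1 w2)"
proof -
  let ?M = "Moebius_function 0"
  have b: "norm (G w1) < 1" using G w1 by (force simp: image_subset_iff)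
  define h where "h = ?M (G w1) \<circ> G \<circ> ?M (-w1)"
  have M_ball: "?M c ` ball 0 1 \<subseteq> ball 0 1" if "norm c < 1" for c
    using Moebius_function_norm_lt_1 that by auto
  have "(?M (G w1) \<circ> G) holomorphic_on ball 0 1"
    using holomorphic_on_compose_gen[OF hol Moebius_function_holomorphic G] b by blast
  then have "h holomorphic_on ball 0 1"
    unfolding h_def using holomorphic_on_compose_gen[OF Moebius_function_holomorphic _ M_ball] w1
    by simp
  moreover have "h 0 = 0"
    by (simp add: h_def Moebius_function_of_zero Moebius_function_eq_zero)
  moreover have "norm (h z) < 1" if "norm z < 1" for z
    using that w1 b G by (simp add: h_def image_subset_iff Moebius_function_norm_lt_1)
  moreover have "norm (?M w1 w2) < 1" using Moebius_function_norm_lt_1 w1 w2 by blast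
  ultimately have "norm (h (?M w1 w2)) \<le> norm (?M w1 w2)"
    by (rule Schwarz_Lemma(1))
  moreover have "h (?M w1 w2) = ?M (G w1) (G w2)"
    using Moebius_function_compose[of "-w1" w1 w2] w1 w2 by (simp add: h_def)
  ultimately show ?thesis by simp
qed

text \<open>By the maximum modulus principle a map into the closed disk is either a unimodular
  constant or maps into the open disk, so the cross-multiplied Schwarz--Pick inequality
  holds for it.\<close>

lemma Schwarz_Pick_cross:
  fixes G :: "complex \<Rightarrow> complex"
  assumes hol: "G holomorphic_on ball 0 1"
    and le: "\<And>z. norm z < 1 \<Longrightarrow> norm (G z) \<le> 1"
    and w1: "norm w1 < 1" and w2: "norm w2 < 1"
  shows "(norm (1 - cnj (G w1) * G w2))\<^sup>2 * ((1 - (norm w1)\<^sup>2) * (1 - (norm w2)\<^sup>2))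
     \<le> (norm (1 - cnj w1 * w2))\<^sup>2 * ((1 - (norm (G w1))\<^sup>2) * (1 - (norm (G w2))\<^sup>2))"
proof (cases "\<exists>z. norm z < 1 \<and> norm (G z) = 1")
  case True
  then obtain z where z: "norm z < 1" "norm (G z) = 1" by blast
  have "G constant_on ball 0 1"
    by (rule maximum_modulus_principle[OF hol _ _ open_ball subset_refl, of z])
       (use z le in auto)
  then have "G w1 = G z" "G w2 = G z"
    using w1 w2 z by (auto simp: constant_on_def)
  moreover have "1 - cnj (G z) * G z = 0"
    using z by (simp add: complex_norm_square[symmetric] mult.commute)
  ultimately show ?thesis by simp
next
  case False
  then have lt: "norm (G z) < 1" if "norm z < 1" for z
    using le that by (meson le_less)
  have "norm (Moebius_function 0 (G w1) (G w2)) \<le> norm (Moebius_function 0 w1 w2)"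
    using Schwarz_Pick_Moebius[OF hol _ w1 w2] lt by (force simp: image_subset_iff)
  then have "1 - (norm (Moebius_function 0 w1 w2))\<^sup>2 \<le> 1 - (norm (Moebius_function 0 (G w1) (G w2)))\<^sup>2"
    by (simp add: power_mono)
  then have "(1 - (norm w1)\<^sup>2) * (1 - (norm w2)\<^sup>2) / (norm (1 - cnj w1 * w2))\<^sup>2
      \<le> (1 - (norm (G w1))\<^sup>2) * (1 - (norm (G w2))\<^sup>2) / (norm (1 - cnj (G w1) * G w2))\<^sup>2"
    using w1 w2 lt[OF w1] lt[OF w2]
    by (simp add: one_minus_norm_Moebius_squared)
  moreover have "(norm (1 - cnj w1 * w2))\<^sup>2 > 0" "(norm (1 - cnj (G w1) * G w2))\<^sup>2 > 0"
    using Moebius_denominator_nonzero w1 w2 lt[OF w1] lt[OF w2] by auto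
  ultimately show ?thesis by (simp add: divide_le_eq le_divide_eq mult_ac)
qed

lemma Schwarz_Pick_symmetric_radial:
  fixes G :: "complex \<Rightarrow> complex"
  assumes hol: "G holomorphic_on ball 0 1"
    and le: "\<And>z. norm z < 1 \<Longrightarrow> norm (G z) \<le> 1"
    and sym: "\<And>z. norm z < 1 \<Longrightarrow> z \<noteq> 0 \<Longrightarrow> G (cnj z) = cnj (G z)"
    and eta: "norm \<eta> = 1" and s: "0 < s" "s < 1"
  shows "norm (1 - (cnj (G (of_real s * \<eta>)))\<^sup>2) * (1 - s\<^sup>2)
     \<le> norm (1 - (of_real s)\<^sup>2 * (cnj \<eta>)\<^sup>2) * (1 - (norm (G (of_real s * \<eta>)))\<^sup>2)"
proof -
  let ?w = "of_real s * \<eta>"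
  have n: "norm ?w = s" "norm (cnj ?w) = s" using eta s by (auto simp: norm_mult)
  have sym_w: "G (cnj ?w) = cnj (G ?w)" using sym[of ?w] n s by (metis less_irrefl norm_zero)
  have sq: "cnj ?w * cnj ?w = (of_real s)\<^sup>2 * (cnj \<eta>)\<^sup>2" "cnj (G ?w) * cnj (G ?w) = (cnj (G ?w))\<^sup>2"
    by (simp_all add: power2_eq_square)
  have "(norm (1 - (cnj (G ?w))\<^sup>2))\<^sup>2 * ((1 - s\<^sup>2) * (1 - s\<^sup>2))
      \<le> (norm (1 - (of_real s)\<^sup>2 * (cnj \<eta>)\<^sup>2))\<^sup>2 * ((1 - (norm (G ?w))\<^sup>2) * (1 - (norm (G ?w))\<^sup>2))"
    using Schwarz_Pick_cross[OF hol le, of ?w "cnj ?w"] n s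
    unfolding sym_w sq complex_mod_cnj by simp
  then have "(norm (1 - (cnj (G ?w))\<^sup>2) * (1 - s\<^sup>2))\<^sup>2
      \<le> (norm (1 - (of_real s)\<^sup>2 * (cnj \<eta>)\<^sup>2) * (1 - (norm (G ?w))\<^sup>2))\<^sup>2"
    by (simp only: power_mult_distrib power2_eq_square[of "1 - _"])
  moreover have "(norm (G ?w))\<^sup>2 \<le> 1"
    using le[of ?w] n s by (simp add: power_le_one)
  then have "0 \<le> norm (1 - (of_real s)\<^sup>2 * (cnj \<eta>)\<^sup>2) * (1 - (norm (G ?w))\<^sup>2)"
    by simp
  ultimately show ?thesis
    by (rule power2_le_imp_le)
qed

lemma radial_limit_one_minus_norm_squared:
  fixes G :: "complex \<Rightarrow> complex"
  assumes d: "(G has_field_derivative G') (at \<eta>)" and unit: "norm (G \<eta>) = 1"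
  shows "((\<lambda>s. (1 - (norm (G (of_real s * \<eta>)))\<^sup>2) / (1 - s\<^sup>2)) \<longlongrightarrow> Re (cnj (G \<eta>) * G' * \<eta>))
           (at_left 1)"
proof -
  define g where "g = (\<lambda>s::real. G (of_real s * \<eta>))"
  define q where "q = (\<lambda>s. (Re (g s))\<^sup>2 + (Im (g s))\<^sup>2)"
  have "((\<lambda>z. z * \<eta>) has_field_derivative \<eta>) (at (of_real 1))"
    by (auto intro!: derivative_eq_intros)
  then have "((\<lambda>z. G (z * \<eta>)) has_field_derivative (G' * \<eta>)) (at (of_real 1))"
    using DERIV_chain2[where f=G and g="\<lambda>z. z * \<eta>"] d by simp
  then have gd: "(g has_vector_derivative (G' * \<eta>)) (at 1)"
    using has_vector_derivative_real_field by (fastforce simp: g_def)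
  have qd: "(q has_real_derivative 2 * Re (cnj (G \<eta>) * G' * \<eta>)) (at 1)"
    unfolding q_def
    by (rule derivative_eq_intros gd[THEN has_field_derivative_Re] gd[THEN has_field_derivative_Im] refl)+
       (simp add: g_def algebra_simps)
  have qn: "q s = (norm (g s))\<^sup>2" for s by (simp add: q_def cmod_power2)
  have q1: "q 1 = 1" using unit by (simp add: qn g_def)
  have "((\<lambda>s. (q s - q 1) / (s - 1)) \<longlongrightarrow> 2 * Re (cnj (G \<eta>) * G' * \<eta>)) (at_left 1)"
    using qd by (auto simp: has_field_derivative_iff intro: tendsto_mono[OF at_le])
  then have lim: "((\<lambda>s. ((q s - q 1) / (s - 1)) / (1 + s)) \<longlongrightarrow> 2 * Re (cnj (G \<eta>) * G' * \<eta>) / (1 + 1))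
      (at_left 1)"
    by (intro tendsto_divide tendsto_add tendsto_const tendsto_ident_at) simp_all
  have ev: "eventually (\<lambda>s. ((q s - q 1) / (s - 1)) / (1 + s)
      = (1 - (norm (G (of_real s * \<eta>)))\<^sup>2) / (1 - s\<^sup>2)) (at_left 1)"
  proof (rule eventually_mono[OF eventually_at_left_real[OF zero_less_one]])
    fix s :: real assume "s \<in> {0<..<1}"
    then have "s - 1 \<noteq> 0" "1 + s \<noteq> 0" "1 - s * s \<noteq> 0"
      using mult_strict_mono[of s 1 s 1] by (auto simp: power2_eq_square)
    then show "((q s - q 1) / (s - 1)) / (1 + s) = (1 - (norm (G (of_real s * \<eta>)))\<^sup>2) / (1 - s\<^sup>2)"
      unfolding q1 unfolding qn g_def by (simp add: field_simps power2_eq_square)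
  qed
  show ?thesis
    by (rule tendsto_eq_rhs[OF lim[unfolded tendsto_cong[OF ev]]]) simp
qed

lemma boundary_derivative_lower_bound:
  fixes G :: "complex \<Rightarrow> complex"
  assumes S: "open S" "cball 0 1 \<subseteq> S" and hol: "G holomorphic_on S"
    and unit: "\<And>z. norm z = 1 \<Longrightarrow> norm (G z) = 1"
    and sym: "\<And>z. norm z < 1 \<Longrightarrow> z \<noteq> 0 \<Longrightarrow> G (cnj z) = cnj (G z)"
    and eta: "norm \<eta> = 1"
  shows "norm (1 - (cnj (G \<eta>))\<^sup>2) / norm (1 - (cnj \<eta>)\<^sup>2) \<le> Re (cnj (G \<eta>) * deriv G \<eta> * \<eta>)"
proof -
  have holb: "G holomorphic_on ball 0 1"
    using hol S(2) ball_subset_cball holomorphic_on_subset by blast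
  have le: "norm (G z) \<le> 1" if "norm z < 1" for z
  proof (rule maximum_modulus_frontier[of G "cball 0 1"])
    show "G holomorphic_on interior (cball 0 1)" using holb by simp
    show "continuous_on (closure (cball 0 1)) G"
      using hol S(2) by (auto intro: holomorphic_on_imp_continuous_on holomorphic_on_subset)
  qed (use that unit in \<open>auto simp: frontier_cball\<close>)
  define L where "L = (\<lambda>s::real. norm (1 - (cnj (G (of_real s * \<eta>)))\<^sup>2) / norm (1 - (of_real s)\<^sup>2 * (cnj \<eta>)\<^sup>2))"
  define R where "R = (\<lambda>s::real. (1 - (norm (G (of_real s * \<eta>)))\<^sup>2) / (1 - s\<^sup>2))"
  have Gd: "(G has_field_derivative deriv G \<eta>) (at \<eta>)"
    using S eta by (intro holomorphic_derivI[OF hol S(1)]) auto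
  have tR: "(R \<longlongrightarrow> Re (cnj (G \<eta>) * deriv G \<eta> * \<eta>)) (at_left 1)"
    unfolding R_def by (rule radial_limit_one_minus_norm_squared[OF Gd unit[OF eta]])
  have "L s \<le> R s" if s: "0 < s" "s < 1" for s
  proof -
    have "1 - s\<^sup>2 > 0" using s by (simp add: power_less_one_iff abs_square_less_1)
    moreover have "norm ((of_real s)\<^sup>2 * (cnj \<eta>)\<^sup>2) < 1"
      using s eta by (simp add: norm_mult norm_power power_less_one_iff abs_square_less_1)
    then have "norm (1 - (of_real s)\<^sup>2 * (cnj \<eta>)\<^sup>2) > 0" by auto
    ultimately show ?thesis
      using Schwarz_Pick_symmetric_radial[OF holb le sym eta s]
      by (simp add: L_def R_def divide_le_eq le_divide_eq mult_ac)
  qed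
  then have ev: "eventually (\<lambda>s. L s \<le> R s) (at_left 1)"
    using eventually_at_left_real[OF zero_less_one] by (auto elim!: eventually_mono)
  show ?thesis
  proof (cases "(cnj \<eta>)\<^sup>2 = 1")
    case True
    \<comment> \<open>then \<open>\<eta> = \<plusminus>1\<close> and the left-hand side is a division by zero, i.e. \<open>0\<close>\<close>
    have "eventually (\<lambda>s. 0 \<le> R s) (at_left 1)"
      using ev by eventually_elim (simp add: L_def order_trans[rotated])
    then have "0 \<le> Re (cnj (G \<eta>) * deriv G \<eta> * \<eta>)"
      by (rule tendsto_lowerbound[OF tR]) simp
    then show ?thesis using True by simp
  next
    case False
    have "isCont (\<lambda>s::real. G (of_real s * \<eta>)) 1"
      using continuous_at_compose[of 1 "\<lambda>s::real. of_real s * \<eta>" G] DERIV_isCont[OF Gd]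
      by (simp add: o_def)
    then have "((\<lambda>s::real. G (of_real s * \<eta>)) \<longlongrightarrow> G \<eta>) (at_left 1)"
      by (auto simp: isCont_def intro: tendsto_mono[OF at_le])
    then have "(L \<longlongrightarrow> norm (1 - (cnj (G \<eta>))\<^sup>2) / norm (1 - (of_real 1)\<^sup>2 * (cnj \<eta>)\<^sup>2)) (at_left 1)"
      unfolding L_def using False by (intro tendsto_intros) simp_all
    then show ?thesis
      by (intro tendsto_le[OF _ tR _ ev]) simp_all
  qed
qed

lemma phase_continuous_argument:
  assumes cont: "continuous_on UNIV (\<lambda>\<omega>. f (cis \<omega>))" and nz: "\<And>\<omega>. f (cis \<omega>) \<noteq> 0"
  shows "continuous_on UNIV (phase f)"
    and "f (cis \<omega>) = complex_of_real (norm (f (cis \<omega>))) * cis (phase f \<omega>)"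
proof -
  obtain h where h: "continuous_on UNIV h" "\<And>x. x \<in> UNIV \<Longrightarrow> f (cis x) = exp (h x)"
    using continuous_logarithm_on_contractible[OF cont contractible_UNIV] nz by metis
  have "continuous_on UNIV (\<lambda>x. Im (h x))" by (intro continuous_intros h(1))
  moreover have "f (cis \<omega>) = complex_of_real (norm (f (cis \<omega>))) * cis (Im (h \<omega>))" for \<omega>
    using h(2)[of \<omega>] by (simp add: exp_eq_polar norm_mult)
  ultimately have "\<exists>\<theta>. continuous_on UNIV \<theta> \<and>
       (\<forall>\<omega>. f (cis \<omega>) = complex_of_real (norm (f (cis \<omega>))) * cis (\<theta> \<omega>))"
    by blast
  then have "continuous_on UNIV (phase f) \<and>
       (\<forall>\<omega>. f (cis \<omega>) = complex_of_real (norm (f (cis \<omega>))) * cis (phase f \<omega>))"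
    unfolding phase_def by (rule someI_ex)
  then show "continuous_on UNIV (phase f)"
    and "f (cis \<omega>) = complex_of_real (norm (f (cis \<omega>))) * cis (phase f \<omega>)"
    by blast+
qed

text \<open>Near \<open>x\<close> a continuous lift \<open>\<theta>\<close> of \<open>\<psi>\<close> is \<open>\<theta> x + arcsin (Im (\<psi> \<omega> / \<psi> x))\<close>, which is
  differentiable.\<close>

lemma cis_lift_has_real_derivative:
  fixes \<theta> :: "real \<Rightarrow> real" and \<psi> :: "real \<Rightarrow> complex"
  assumes cont: "continuous_on UNIV \<theta>" and eq: "\<And>\<omega>. cis (\<theta> \<omega>) = \<psi> \<omega>"
    and d: "(\<psi> has_vector_derivative \<psi>') (at x)"
  shows "(\<theta> has_real_derivative Im (\<psi>' / \<psi> x)) (at x)"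
proof -
  have nz: "\<psi> x \<noteq> 0" using eq[of x] by (metis cis_neq_zero)
  have "(\<theta> \<longlongrightarrow> \<theta> x) (nhds x)"
    using cont by (simp add: continuous_on_eq_continuous_at isCont_def tendsto_at_iff_tendsto_nhds)
  then have "eventually (\<lambda>\<omega>. dist (\<theta> \<omega>) (\<theta> x) < pi/2) (nhds x)"
    by (rule tendstoD) simp
  then have ev: "eventually (\<lambda>\<omega>. \<theta> \<omega> = \<theta> x + arcsin (Im (\<psi> \<omega> / \<psi> x))) (nhds x)"
  proof eventually_elim
    case (elim \<omega>)
    then have "- (pi/2) \<le> \<theta> \<omega> - \<theta> x" "\<theta> \<omega> - \<theta> x \<le> pi/2"
      unfolding dist_real_def by linarith+
    moreover have "Im (\<psi> \<omega> / \<psi> x) = sin (\<theta> \<omega> - \<theta> x)"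
      using eq by (metis cis.sel(2) cis_divide)
    ultimately show ?case by (simp add: arcsin_sin)
  qed
  have d1: "((\<lambda>\<omega>. Im (\<psi> \<omega> / \<psi> x)) has_real_derivative Im (\<psi>' / \<psi> x)) (at x)"
    by (rule has_field_derivative_Im[OF has_vector_derivative_divide[OF d]])
  have d0: "DERIV arcsin (Im (\<psi> x / \<psi> x)) :> 1"
    using DERIV_arcsin[of 0] nz by simp
  have "((\<lambda>\<omega>. \<theta> x + arcsin (Im (\<psi> \<omega> / \<psi> x))) has_real_derivative (1 * Im (\<psi>' / \<psi> x))) (at x)"
    by (rule derivative_eq_intros DERIV_chain2[OF d0 d1] refl)+ simp
  then show ?thesis
    using DERIV_cong_ev[OF refl ev refl] by simp
qed

lemma poly_map_of_real_cnj:
  "poly (map_poly complex_of_real p) (cnj z) = cnj (poly (map_poly complex_of_real p) z)"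
  by (subst poly_cnj_real) (auto simp: coeff_map_poly)

lemma poly_monom_mult_reflect_poly:
  fixes p :: "'a :: field poly"
  assumes "w \<noteq> 0" "degree p \<le> n"
  shows "poly (monom 1 (n - degree p) * reflect_poly p) w = w ^ n * poly p (inverse w)"
  using poly_reflect_poly_nz[OF assms(1), of p] assms(2)
  by (simp add: poly_monom mult.assoc power_add[symmetric])

text \<open>On the unit circle \<open>f z = f (1 / cnj z)\<close>, so \<open>G w = f (1 / w)\<close> turns a stable proper
  transfer function into a function holomorphic on a neighbourhood of the closed disk.\<close>

lemma RHinf_reflection:
  assumes "f \<in> RHinf"
  obtains G S where "open S" "cball 0 1 \<subseteq> S" "G holomorphic_on S"
    "\<And>z. norm z = 1 \<Longrightarrow> f z = G (cnj z)"
    "\<And>z. norm z < 1 \<Longrightarrow> z \<noteq> 0 \<Longrightarrow> G (cnj z) = cnj (G z)"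
proof -
  obtain P Q :: "real poly" where Q0: "Q \<noteq> 0" and deg: "degree P \<le> degree Q"
    and roots: "\<And>z. poly (map_poly complex_of_real Q) z = 0 \<Longrightarrow> norm z < 1"
    and feq: "\<And>z. poly (map_poly complex_of_real Q) z \<noteq> 0 \<Longrightarrow>
           f z = poly (map_poly complex_of_real P) z / poly (map_poly complex_of_real Q) z"
    using assms unfolding RHinf_def by blast
  define Pc where "Pc = map_poly complex_of_real P"
  define Qc where "Qc = map_poly complex_of_real Q"
  have dP: "degree Pc = degree P" and dQ: "degree Qc = degree Q"
    by (simp_all add: Pc_def Qc_def degree_map_poly)
  have Qc0: "Qc \<noteq> 0" using Q0 unfolding Qc_def by (subst map_poly_eq_0_iff) auto
  define A where "A = monom 1 (degree Q - degree P) * reflect_poly Pc"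
  define B where "B = reflect_poly Qc"
  define G where "G = (\<lambda>w. poly A w / poly B w)"
  define S where "S = - {w. poly B w = 0}"
  have "finite {w. poly B w = 0}"
    using Qc0 by (intro poly_roots_finite) (simp add: B_def)
  then have "open S" unfolding S_def by (simp add: finite_imp_closed open_Compl)
  have Gw: "G w = poly Pc (inverse w) / poly Qc (inverse w)" if "w \<noteq> 0" for w
    using poly_monom_mult_reflect_poly[OF that, of Pc "degree Q"]
      poly_monom_mult_reflect_poly[OF that, of Qc "degree Q"] that deg
    by (simp add: G_def A_def B_def dP dQ)
  have "w \<in> S" if "norm w \<le> 1" for w
  proof (cases "w = 0")
    case True
    then show ?thesis using Qc0 by (simp add: S_def B_def)
  next
    case False
    have "1 \<le> norm (inverse w)"
      using that False by (simp add: norm_inverse one_le_inverse_iff)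
    then have "poly Qc (inverse w) \<noteq> 0"
      using roots[of "inverse w"] by (auto simp: Qc_def)
    then show ?thesis
      using poly_monom_mult_reflect_poly[OF False, of Qc "degree Q"] False
      by (simp add: S_def B_def dQ)
  qed
  then have "cball 0 1 \<subseteq> S" by auto
  moreover have "G holomorphic_on S"
    unfolding G_def S_def by (intro holomorphic_intros) auto
  moreover have "f z = G (cnj z)" if "norm z = 1" for z
  proof -
    have "z * cnj z = 1" using complex_norm_square[of z] that by simp
    then have "inverse (cnj z) = z" by (metis inverse_unique mult.commute)
    moreover have "poly Qc z \<noteq> 0" using roots that unfolding Qc_def by fastforce
    moreover have "cnj z \<noteq> 0" using that by auto
    ultimately show ?thesis using feq[of z] Gw[of "cnj z"] by (simp add: Pc_def Qc_def)
  qed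
  moreover have "G (cnj z) = cnj (G z)" if "z \<noteq> 0" for z
  proof -
    have "G (cnj z) = poly Pc (cnj (inverse z)) / poly Qc (cnj (inverse z))"
      using Gw that by simp
    also have "\<dots> = cnj (poly Pc (inverse z) / poly Qc (inverse z))"
      by (simp only: Pc_def Qc_def poly_map_of_real_cnj complex_cnj_divide)
    also have "\<dots> = cnj (G z)"
      using Gw that by simp
    finally show ?thesis .
  qed
  ultimately show ?thesis using that \<open>open S\<close> by blast
qed

lemma AP_norm_eq_1:
  assumes "f \<in> AP" "norm z = 1"
  shows "norm (f z) = 1"
proof -
  have "cis (Arg z) = z" using rcis_cmod_Arg[of z] assms(2) by (simp add: rcis_def)
  moreover have "norm (f (cis (Arg z))) = 1" using assms(1) by (simp add: AP_def)
  ultimately show ?thesis by simp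
qed

lemma AP_boundary_nonzero: "f \<in> AP \<Longrightarrow> f (cis \<omega>) \<noteq> 0"
  using AP_norm_eq_1[of f "cis \<omega>"] by auto

lemma AP_reflection:
  assumes "f \<in> AP"
  obtains G S where "open S" "cball 0 1 \<subseteq> S" "G holomorphic_on S"
    "\<And>z. norm z = 1 \<Longrightarrow> norm (G z) = 1"
    "\<And>\<omega>. f (cis \<omega>) = G (cis (- \<omega>))"
    "\<And>z. norm z < 1 \<Longrightarrow> z \<noteq> 0 \<Longrightarrow> G (cnj z) = cnj (G z)"
proof -
  obtain G S where GS: "open S" "cball 0 1 \<subseteq> S" "G holomorphic_on S"
    and fG: "\<And>z. norm z = 1 \<Longrightarrow> f z = G (cnj z)"
    and sym: "\<And>z. norm z < 1 \<Longrightarrow> z \<noteq> 0 \<Longrightarrow> G (cnj z) = cnj (G z)"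
    using assms unfolding AP_def by (auto intro: RHinf_reflection)
  have unit: "norm (G z) = 1" if "norm z = 1" for z
    using fG[of "cnj z"] AP_norm_eq_1[OF assms, of "cnj z"] that by simp
  have "f (cis \<omega>) = G (cis (- \<omega>))" for \<omega>
    using fG[of "cis \<omega>"] by (simp add: cis_cnj)
  from GS unit this sym show ?thesis by (rule that)
qed

lemma circle_reversed_has_vector_derivative:
  assumes "open S" "cball 0 1 \<subseteq> S" "G holomorphic_on S"
  shows "((\<lambda>\<omega>. G (cis (- \<omega>))) has_vector_derivative deriv G (cis (- x)) * (- \<i> * cis (- x))) (at x)"
proof -
  have "cis (- x) \<in> S" using assms(2) by auto
  then have "(G has_field_derivative deriv G (cis (- x))) (at ((\<lambda>z. exp (- (\<i> * z))) (of_real x)))"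
    using holomorphic_derivI[OF assms(3,1)] by (simp add: cis_conv_exp)
  moreover have "((\<lambda>z. exp (- (\<i> * z))) has_field_derivative (- \<i> * cis (- x))) (at (of_real x))"
    by (auto intro!: derivative_eq_intros simp: cis_conv_exp)
  ultimately have "((\<lambda>z. G (exp (- (\<i> * z)))) has_field_derivative deriv G (cis (- x)) * (- \<i> * cis (- x)))
      (at (of_real x))"
    by (rule DERIV_chain2)
  then show ?thesis
    using has_vector_derivative_real_field by (fastforce simp: cis_conv_exp)
qed

lemma AP_boundary_continuous: "f \<in> AP \<Longrightarrow> continuous_on UNIV (\<lambda>\<omega>. f (cis \<omega>))"
proof -
  assume "f \<in> AP"
  then obtain G S where GS: "open S" "cball 0 1 \<subseteq> S" "G holomorphic_on S"
    and fG: "\<And>\<omega>. f (cis \<omega>) = G (cis (- \<omega>))"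
    by (rule AP_reflection) blast
  have "continuous (at x) (\<lambda>\<omega>. G (cis (- \<omega>)))" for x
    using has_vector_derivative_continuous[OF circle_reversed_has_vector_derivative[OF GS]] .
  then show ?thesis by (simp add: fG continuous_at_imp_continuous_on)
qed

lemma AP_phase_continuous: "f \<in> AP \<Longrightarrow> continuous_on UNIV (phase f)"
  by (rule phase_continuous_argument(1)[OF AP_boundary_continuous AP_boundary_nonzero])

lemma AP_cis_phase:
  assumes "f \<in> AP"
  shows "f (cis \<omega>) = cis (phase f \<omega>)"
proof -
  have "f (cis \<omega>) = complex_of_real (norm (f (cis \<omega>))) * cis (phase f \<omega>)"
    by (rule phase_continuous_argument(2)[OF AP_boundary_continuous[OF assms] AP_boundary_nonzero[OF assms]])
  then show ?thesis using AP_norm_eq_1[OF assms, of "cis \<omega>"] by simp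
qed

lemma AP_phase_deriv_eq:
  assumes "f \<in> AP" and "((\<lambda>\<omega>. f (cis \<omega>)) has_vector_derivative \<psi>') (at x)"
  shows "phase_deriv f x = Im (\<psi>' / f (cis x))"
proof -
  have "(phase f has_real_derivative Im (\<psi>' / f (cis x))) (at x)"
    by (rule cis_lift_has_real_derivative[OF AP_phase_continuous[OF assms(1)]])
       (use AP_cis_phase[OF assms(1)] assms(2) in auto)
  then show ?thesis unfolding phase_deriv_def by (rule DERIV_imp_deriv)
qed

lemma AP_phase_deriv_le:
  assumes "f \<in> AP"
  shows "phase_deriv f x \<le> - (norm (1 - (cnj (f (cis x)))\<^sup>2) / norm (1 - (cis x)\<^sup>2))"
proof -
  obtain G S where GS: "open S" "cball 0 1 \<subseteq> S" "G holomorphic_on S"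
    and unit: "\<And>z. norm z = 1 \<Longrightarrow> norm (G z) = 1"
    and fG: "\<And>\<omega>. f (cis \<omega>) = G (cis (- \<omega>))"
    and sym: "\<And>z. norm z < 1 \<Longrightarrow> z \<noteq> 0 \<Longrightarrow> G (cnj z) = cnj (G z)"
    by (rule AP_reflection[OF assms]) blast
  define \<eta> where "\<eta> = cis (- x)"
  have \<eta>: "norm \<eta> = 1" "cnj \<eta> = cis x" "f (cis x) = G \<eta>"
    by (simp_all add: \<eta>_def fG cis_cnj)
  have "((\<lambda>\<omega>. f (cis \<omega>)) has_vector_derivative deriv G \<eta> * (- \<i> * \<eta>)) (at x)"
    using circle_reversed_has_vector_derivative[OF GS, of x] by (simp add: fG \<eta>_def)
  then have "phase_deriv f x = Im (deriv G \<eta> * (- \<i> * \<eta>) / G \<eta>)"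
    using AP_phase_deriv_eq[OF assms] \<eta>(3) by simp
  also have "\<dots> = - Re (cnj (G \<eta>) * deriv G \<eta> * \<eta>)"
    using unit[OF \<eta>(1)] by (simp add: divide_conv_cnj mult_ac)
  also have "\<dots> \<le> - (norm (1 - (cnj (G \<eta>))\<^sup>2) / norm (1 - (cnj \<eta>)\<^sup>2))"
    using boundary_derivative_lower_bound[OF GS unit sym \<eta>(1)] by simp
  finally show ?thesis
    by (simp add: \<eta>(2,3))
qed

lemma norm_1_minus_cis_double: "norm (1 - cis (2 * t)) = 2 * \<bar>sin t\<bar>"
proof -
  have "(norm (1 - cis (2 * t)))\<^sup>2 = (1 - cos (2 * t))\<^sup>2 + (sin (2 * t))\<^sup>2"
    by (simp add: cmod_power2)
  also have "\<dots> = (2 * (sin t)\<^sup>2)\<^sup>2 + (2 * sin t * cos t)\<^sup>2"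
    by (simp add: cos_double_sin sin_double)
  also have "\<dots> = 4 * (sin t)\<^sup>2 * ((sin t)\<^sup>2 + (cos t)\<^sup>2)"
    by (simp only: power2_eq_square algebra_simps)
  also have "\<dots> = (2 * \<bar>sin t\<bar>)\<^sup>2"
    by (simp add: power_mult_distrib)
  finally show ?thesis
    by (rule power2_eq_imp_eq) simp_all
qed

lemma hinf_norm_AP: "f \<in> AP \<Longrightarrow> hinf_norm f = 1"
  using pi_gt_zero by (simp add: AP_def hinf_norm_def)

lemma AP_at_iff:
  assumes "f \<in> AP"
  shows "f \<in> AP_at \<omega>p \<theta>p \<longleftrightarrow> f (cis \<omega>p) = cis \<theta>p"
proof -
  have "f (cis \<omega>p) = cis \<theta>p \<longleftrightarrow> cis (phase f \<omega>p - \<theta>p) = 1"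
    using AP_cis_phase[OF assms] by (metis cis_divide divide_self_if cis_neq_zero divide_eq_1_iff)
  also have "\<dots> \<longleftrightarrow> (\<exists>k::int. phase f \<omega>p = \<theta>p + 2 * pi * of_int k)"
    by (auto simp: cis_eq_1_iff algebra_simps)
  finally show ?thesis
    using assms hinf_norm_AP[OF assms] AP_norm_eq_1[OF assms]
    by (auto simp: AP_at_def RF_def AP_def)
qed

lemma AP_at_phase_deriv_le:
  assumes "f \<in> AP_at \<omega>p \<theta>p"
  shows "phase_deriv f \<omega>p \<le> - (\<bar>sin \<theta>p\<bar> / \<bar>sin \<omega>p\<bar>)"
proof -
  have f: "f \<in> AP" using assms by (simp add: AP_at_def)
  have cis_sq: "(cis t)\<^sup>2 = cis (2 * t)" for t
    using Complex.DeMoivre[of t 2] by simp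
  have "(cnj (f (cis \<omega>p)))\<^sup>2 = cis (2 * (- \<theta>p))"
    using assms AP_at_iff[OF f] cis_sq[of "- \<theta>p"] by (simp add: cis_cnj)
  then show ?thesis
    using AP_phase_deriv_le[OF f, of \<omega>p] norm_1_minus_cis_double[of "- \<theta>p"]
      norm_1_minus_cis_double[of \<omega>p]
    by (simp add: cis_sq)
qed

lemma constant_in_AP:
  fixes r :: real
  assumes "\<bar>r\<bar> = 1"
  shows "(\<lambda>z. complex_of_real r) \<in> AP"
proof -
  have "(\<lambda>z. complex_of_real r) \<in> RHinf"
    unfolding RHinf_def
    by (rule CollectI, rule exI[of _ "[:r:]"], rule exI[of _ "[:1:]"]) (simp add: map_poly_pCons)
  then show ?thesis using assms by (simp add: AP_def)
qed

lemma phase_deriv_constant: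
  fixes r :: real
  assumes "\<bar>r\<bar> = 1"
  shows "phase_deriv (\<lambda>z. complex_of_real r) x = 0"
  using AP_phase_deriv_eq[OF constant_in_AP[OF assms] has_vector_derivative_const] by simp

definition first_order_allpass :: "real \<Rightarrow> real \<Rightarrow> complex \<Rightarrow> complex" where
  "first_order_allpass r a z = complex_of_real r * (of_real a * z + 1) / (z + of_real a)"

lemma unit_circle_plus_real_nonzero:
  fixes a :: real and z :: complex
  assumes "\<bar>a\<bar> < 1" "norm z = 1"
  shows "z + of_real a \<noteq> 0"
  using assms by (metis add_eq_0_iff norm_minus_cancel norm_of_real less_irrefl)

lemma norm_allpass_numerator:
  fixes a :: real and z :: complex
  assumes "norm z = 1"
  shows "norm (of_real a * z + 1) = norm (z + of_real a)"
proof -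
  have "z * cnj z = 1" using assms complex_norm_square[of z] by simp
  then have "of_real a * z + 1 = z * cnj (z + of_real a)"
    by (simp add: algebra_simps)
  then have "norm (of_real a * z + 1) = norm z * norm (cnj (z + of_real a))"
    by (simp only: norm_mult)
  then show ?thesis by (simp only: assms complex_mod_cnj mult_1)
qed

lemma first_order_allpass_in_AP:
  fixes a r :: real
  assumes a: "\<bar>a\<bar> < 1" and r: "\<bar>r\<bar> = 1"
  shows "first_order_allpass r a \<in> AP"
proof -
  have "first_order_allpass r a \<in> RHinf"
    unfolding RHinf_def
  proof (rule CollectI, rule exI[of _ "[:r, r * a:]"], rule exI[of _ "[:a, 1:]"], intro conjI allI impI)
    fix z :: complex
    assume "poly (map_poly complex_of_real [:a, 1:]) z = 0"
    then have "z = - of_real a" by (simp add: map_poly_pCons add_eq_0_iff2)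
    then show "norm z < 1" using a by simp
  next
    fix z :: complex
    show "first_order_allpass r a z =
      poly (map_poly complex_of_real [:r, r * a:]) z / poly (map_poly complex_of_real [:a, 1:]) z"
      by (simp add: first_order_allpass_def map_poly_pCons algebra_simps)
  qed simp_all
  moreover have "norm (first_order_allpass r a (cis \<omega>)) = 1" for \<omega>
    using norm_allpass_numerator[of "cis \<omega>" a] unit_circle_plus_real_nonzero[OF a, of "cis \<omega>"] r
    by (simp add: first_order_allpass_def norm_divide norm_mult)
  ultimately show ?thesis by (simp add: AP_def)
qed

lemma first_order_allpass_phase_deriv:
  fixes a r x :: real
  assumes a: "\<bar>a\<bar> < 1" and r: "\<bar>r\<bar> = 1"
  shows "phase_deriv (first_order_allpass r a) x = (a\<^sup>2 - 1) / (1 + a\<^sup>2 + 2 * a * cos x)"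
proof -
  define \<zeta> where "\<zeta> = cis x"
  define K where "K = 1 + a\<^sup>2 + 2 * a * cos x"
  have z1: "norm \<zeta> = 1" by (simp add: \<zeta>_def)
  then have z0: "\<zeta> \<noteq> 0" by auto
  have nz1: "\<zeta> + of_real a \<noteq> 0" by (rule unit_circle_plus_real_nonzero[OF a z1])
  have nz2: "of_real a * \<zeta> + 1 \<noteq> 0" using norm_allpass_numerator[OF z1, of a] nz1 by auto
  have key: "(\<zeta> + of_real a) * (of_real a * \<zeta> + 1) = \<zeta> * of_real K"
  proof (rule complex_eqI)
    have R: "Re \<zeta> = cos x" "Im \<zeta> = sin x" by (simp_all add: \<zeta>_def)
    have "(cos x + a) * (a * cos x + 1) - sin x * (a * sin x) = cos x * (1 + a\<^sup>2 + 2 * a * cos x)"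
      using sin_cos_squared_add[of x] by algebra
    then show "Re ((\<zeta> + of_real a) * (of_real a * \<zeta> + 1)) = Re (\<zeta> * of_real K)"
      by (simp add: R K_def)
    show "Im ((\<zeta> + of_real a) * (of_real a * \<zeta> + 1)) = Im (\<zeta> * of_real K)"
      by (simp add: R K_def) algebra
  qed
  then have K0: "K \<noteq> 0" using nz1 nz2 by auto
  define F' where "F' = complex_of_real r * complex_of_real (a\<^sup>2 - 1) / (\<zeta> + of_real a)\<^sup>2"
  have "(first_order_allpass r a has_field_derivative F') (at \<zeta>)"
    unfolding first_order_allpass_def[abs_def] F'_def using nz1
    by (auto intro!: derivative_eq_intros simp: power2_eq_square field_simps)
  then have "(first_order_allpass r a has_field_derivative F') (at ((\<lambda>z. exp (\<i> * z)) (of_real x)))"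
    by (simp add: \<zeta>_def cis_conv_exp)
  moreover have "((\<lambda>z. exp (\<i> * z)) has_field_derivative \<zeta> * \<i>) (at (of_real x))"
    by (auto intro!: derivative_eq_intros simp: \<zeta>_def cis_conv_exp)
  ultimately have "((\<lambda>z. first_order_allpass r a (exp (\<i> * z))) has_field_derivative F' * (\<zeta> * \<i>))
      (at (of_real x))"
    by (rule DERIV_chain2)
  then have "((\<lambda>\<omega>. first_order_allpass r a (cis \<omega>)) has_vector_derivative F' * (\<zeta> * \<i>)) (at x)"
    using has_vector_derivative_real_field by (fastforce simp: cis_conv_exp)
  then have "phase_deriv (first_order_allpass r a) x = Im (F' * (\<zeta> * \<i>) / first_order_allpass r a \<zeta>)"
    using AP_phase_deriv_eq[OF first_order_allpass_in_AP[OF a r]] by (simp add: \<zeta>_def)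
  also have "F' * (\<zeta> * \<i>) / first_order_allpass r a \<zeta>
      = of_real (a\<^sup>2 - 1) * (\<zeta> * \<i>) / ((\<zeta> + of_real a) * (of_real a * \<zeta> + 1))"
    using nz1 nz2 r by (auto simp: F'_def first_order_allpass_def power2_eq_square)
  also have "\<dots> = \<i> * of_real ((a\<^sup>2 - 1) / K)"
    unfolding key using K0 z0 by (auto simp: field_simps)
  finally show ?thesis by (simp add: K_def)
qed

text \<open>The pole \<open>a = N / D\<close> solves \<open>r (a \<zeta> + 1) = cis \<theta> (\<zeta> + a)\<close> for \<open>\<zeta> = cis \<omega>\<close>, which is
  a real-linear equation in \<open>a\<close> since \<open>r\<^sup>2 = 1\<close>. The sign \<open>r = - sgn (sin \<theta>)\<close> makes
  \<open>D > E \<ge> 0\<close>, so \<open>N\<^sup>2 = E D\<close> gives \<open>|a| < 1\<close>.\<close>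

lemma first_order_allpass_interpolation:
  fixes \<omega> \<theta> :: real
  assumes \<omega>: "0 < \<omega>" "\<omega> < pi" and \<theta>: "sin \<theta> \<noteq> 0"
  obtains r a where "r = 1 \<or> r = -1" "\<bar>a\<bar> < 1"
    "first_order_allpass r a (cis \<omega>) = cis \<theta>"
    "(a\<^sup>2 - 1) / (1 + a\<^sup>2 + 2 * a * cos \<omega>) = - \<bar>sin \<theta> / sin \<omega>\<bar>"
proof -
  define r :: real where "r = (if sin \<theta> > 0 then -1 else 1)"
  have r2: "r\<^sup>2 = 1" and rs: "r * sin \<theta> = - \<bar>sin \<theta>\<bar>" using \<theta> by (auto simp: r_def)
  have sw: "sin \<omega> > 0" using \<omega> by (simp add: sin_gt_zero)
  have pw: "(sin \<omega>)\<^sup>2 + (cos \<omega>)\<^sup>2 = 1" and pt: "(sin \<theta>)\<^sup>2 + (cos \<theta>)\<^sup>2 = 1" by simp_all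
  define N where "N = r * cos \<theta> - cos \<omega>"
  define D where "D = 1 - r * (cos \<omega> * cos \<theta> + sin \<omega> * sin \<theta>)"
  define E where "E = 1 - r * (cos \<omega> * cos \<theta> - sin \<omega> * sin \<theta>)"
  define a where "a = N / D"
  have "D - E = - 2 * sin \<omega> * (r * sin \<theta>)"
    by (simp add: D_def E_def algebra_simps)
  then have DE: "D - E = 2 * sin \<omega> * \<bar>sin \<theta>\<bar>"
    using rs by simp
  have "E \<ge> 0"
    using abs_cos_le_one[of "\<omega> + \<theta>"] \<open>r\<^sup>2 = 1\<close>
    by (auto simp: E_def cos_add abs_le_iff r_def split: if_splits)
  moreover have "D - E > 0" using DE sw \<theta> by simp
  ultimately have D: "D > 0" by linarith
  have NED: "N\<^sup>2 = E * D"
    unfolding N_def D_def E_def using r2 pw pt by algebra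
  have "a\<^sup>2 < 1"
    using NED D \<open>D - E > 0\<close> by (simp add: a_def power_divide divide_less_eq power2_eq_square)
  then have "\<bar>a\<bar> < 1" by (simp add: abs_square_less_1)
  have re: "r * (N * cos \<omega> + D) = cos \<theta> * (cos \<omega> * D + N) - sin \<theta> * sin \<omega> * D"
    unfolding N_def D_def using r2 pw pt by algebra
  have im: "r * N * sin \<omega> = cos \<theta> * sin \<omega> * D + sin \<theta> * (cos \<omega> * D + N)"
    unfolding N_def D_def using r2 pw pt by algebra
  have "complex_of_real r * (of_real a * cis \<omega> + 1) = cis \<theta> * (cis \<omega> + of_real a)"
  proof (rule complex_eqI)
    show "Re (complex_of_real r * (of_real a * cis \<omega> + 1)) = Re (cis \<theta> * (cis \<omega> + of_real a))"
      using re D by (simp add: a_def field_simps)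
    show "Im (complex_of_real r * (of_real a * cis \<omega> + 1)) = Im (cis \<theta> * (cis \<omega> + of_real a))"
      using im D by (simp add: a_def field_simps)
  qed
  then have "first_order_allpass r a (cis \<omega>) = cis \<theta>"
    using unit_circle_plus_real_nonzero[OF \<open>\<bar>a\<bar> < 1\<close>, of "cis \<omega>"]
    by (simp add: first_order_allpass_def divide_eq_eq)
  have "a\<^sup>2 - 1 = (N\<^sup>2 - D\<^sup>2) / D\<^sup>2" "1 + a\<^sup>2 + 2 * a * cos \<omega> = (D\<^sup>2 + N\<^sup>2 + 2 * N * D * cos \<omega>) / D\<^sup>2"
    using D by (simp_all add: a_def power_divide diff_divide_distrib add_divide_distrib power2_eq_square)
  then have "(a\<^sup>2 - 1) / (1 + a\<^sup>2 + 2 * a * cos \<omega>) = (N\<^sup>2 - D\<^sup>2) / (D\<^sup>2 + N\<^sup>2 + 2 * N * D * cos \<omega>)"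
    using D by simp
  also have "\<dots> = (D * (E - D)) / (D * (D + E + 2 * N * cos \<omega>))"
    unfolding NED by (simp add: algebra_simps power2_eq_square)
  also have "D + E + 2 * N * cos \<omega> = 2 * (sin \<omega>)\<^sup>2"
    unfolding N_def D_def E_def using r2 pw pt by algebra
  also have "(D * (E - D)) / (D * (2 * (sin \<omega>)\<^sup>2)) = (E - D) / (2 * (sin \<omega>)\<^sup>2)"
    using D by simp
  also have "\<dots> = - \<bar>sin \<theta> / sin \<omega>\<bar>"
    using DE sw by (simp add: abs_divide power2_eq_square field_simps)
  finally have "(a\<^sup>2 - 1) / (1 + a\<^sup>2 + 2 * a * cos \<omega>) = - \<bar>sin \<theta> / sin \<omega>\<bar>" .
  moreover have "r = 1 \<or> r = -1" by (simp add: r_def)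
  ultimately show ?thesis
    using that \<open>\<bar>a\<bar> < 1\<close> \<open>first_order_allpass r a (cis \<omega>) = cis \<theta>\<close> by blast
qed

lemma constant_attains_zero:
  assumes "sin \<theta> = 0"
  shows "\<exists>f\<in>{(\<lambda>z. 1), (\<lambda>z. -1)}. f \<in> AP_at \<omega> \<theta> \<and> phase_deriv f \<omega> = 0"
proof -
  have "(cos \<theta>)\<^sup>2 = 1" using sin_cos_squared_add[of \<theta>] assms by simp
  then obtain r :: real where r: "r = 1 \<or> r = -1" "cis \<theta> = complex_of_real r"
    using assms by (auto simp: power2_eq_1_iff complex_eq_iff)
  then have "\<bar>r\<bar> = 1" by auto
  then have "(\<lambda>z. complex_of_real r) \<in> AP_at \<omega> \<theta>" "phase_deriv (\<lambda>z. complex_of_real r) \<omega> = 0"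
    using AP_at_iff[OF constant_in_AP] phase_deriv_constant r(2) by auto
  then show ?thesis using r(1) by auto
qed

lemma first_order_allpass_attains:
  fixes \<omega> \<theta> :: real
  assumes "0 < \<omega>" "\<omega> < pi" "sin \<theta> \<noteq> 0"
  shows "\<exists>s\<in>{1::complex, -1}. \<exists>a::real. \<bar>a\<bar> < 1 \<and>
             (\<lambda>z. s * (of_real a * z + 1) / (z + of_real a)) \<in> AP_at \<omega> \<theta> \<and>
             phase_deriv (\<lambda>z. s * (of_real a * z + 1) / (z + of_real a)) \<omega> = - \<bar>sin \<theta> / sin \<omega>\<bar>"
proof -
  obtain r a where r: "r = 1 \<or> r = -1" and a: "\<bar>a\<bar> < 1"
    and val: "first_order_allpass r a (cis \<omega>) = cis \<theta>"
    and dv: "(a\<^sup>2 - 1) / (1 + a\<^sup>2 + 2 * a * cos \<omega>) = - \<bar>sin \<theta> / sin \<omega>\<bar>"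
    by (rule first_order_allpass_interpolation[OF assms])
  have r1: "\<bar>r\<bar> = 1" using r by auto
  have eq: "(\<lambda>z. complex_of_real r * (of_real a * z + 1) / (z + of_real a)) = first_order_allpass r a"
    by (simp add: first_order_allpass_def fun_eq_iff)
  show ?thesis
  proof (intro bexI[of _ "complex_of_real r"] exI[of _ a] conjI)
    show "(\<lambda>z. complex_of_real r * (of_real a * z + 1) / (z + of_real a)) \<in> AP_at \<omega> \<theta>"
      unfolding eq using AP_at_iff[OF first_order_allpass_in_AP[OF a r1]] val by simp
    show "phase_deriv (\<lambda>z. complex_of_real r * (of_real a * z + 1) / (z + of_real a)) \<omega>
        = - \<bar>sin \<theta> / sin \<omega>\<bar>"
      unfolding eq using first_order_allpass_phase_deriv[OF a r1] dv by simp
  qed (use a r in auto)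
qed

theorem proposition2:
  fixes \<omega>p \<theta>p v :: real
  assumes "0 \<le> \<omega>p" and "\<omega>p \<le> pi"
    and "(0 < \<omega>p \<and> \<omega>p < pi \<and> v = - \<bar>sin \<theta>p / sin \<omega>p\<bar>)
         \<or> ((\<omega>p = 0 \<or> \<omega>p = pi) \<and> (\<exists>k::int. \<theta>p = of_int k * pi) \<and> v = 0)"
  shows "(\<forall>f\<in>AP_at \<omega>p \<theta>p. phase_deriv f \<omega>p \<le> v)
       \<and> Sup ((\<lambda>f. phase_deriv f \<omega>p) ` AP_at \<omega>p \<theta>p) = v
       \<and> (v = 0 \<longrightarrow> (\<exists>f\<in>{(\<lambda>z. 1), (\<lambda>z. -1)}. f \<in> AP_at \<omega>p \<theta>p \<and> phase_deriv f \<omega>p = v))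
       \<and> (v \<noteq> 0 \<longrightarrow> (\<exists>s\<in>{1::complex, -1}. \<exists>a::real. \<bar>a\<bar> < 1 \<and>
             (\<lambda>z. s * (of_real a * z + 1) / (z + of_real a)) \<in> AP_at \<omega>p \<theta>p \<and>
             phase_deriv (\<lambda>z. s * (of_real a * z + 1) / (z + of_real a)) \<omega>p = v))"
proof -
  have bound: "\<forall>f\<in>AP_at \<omega>p \<theta>p. phase_deriv f \<omega>p \<le> v"
  proof
    fix f assume "f \<in> AP_at \<omega>p \<theta>p"
    then have "phase_deriv f \<omega>p \<le> - (\<bar>sin \<theta>p\<bar> / \<bar>sin \<omega>p\<bar>)"
      by (rule AP_at_phase_deriv_le)
    then show "phase_deriv f \<omega>p \<le> v" using assms(3) by (auto simp: abs_divide)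
  qed
  have "sin \<theta>p = 0" if "v = 0"
    using assms(3) that sin_gt_zero[of \<omega>p] sin_zero_iff_int2[of \<theta>p] by auto
  then have zero: "v = 0 \<longrightarrow> (\<exists>f\<in>{(\<lambda>z. 1), (\<lambda>z. -1)}. f \<in> AP_at \<omega>p \<theta>p \<and> phase_deriv f \<omega>p = v)"
    using constant_attains_zero by blast
  have "0 < \<omega>p \<and> \<omega>p < pi \<and> sin \<theta>p \<noteq> 0 \<and> v = - \<bar>sin \<theta>p / sin \<omega>p\<bar>" if "v \<noteq> 0"
    using assms(3) that by auto
  then have nonzero: "v \<noteq> 0 \<longrightarrow> (\<exists>s\<in>{1::complex, -1}. \<exists>a::real. \<bar>a\<bar> < 1 \<and>
             (\<lambda>z. s * (of_real a * z + 1) / (z + of_real a)) \<in> AP_at \<omega>p \<theta>p \<and>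
             phase_deriv (\<lambda>z. s * (of_real a * z + 1) / (z + of_real a)) \<omega>p = v)"
    using first_order_allpass_attains by blast
  have "v \<in> (\<lambda>f. phase_deriv f \<omega>p) ` AP_at \<omega>p \<theta>p"
    using zero nonzero by (cases "v = 0") (auto simp: image_iff)
  then have "Sup ((\<lambda>f. phase_deriv f \<omega>p) ` AP_at \<omega>p \<theta>p) = v"
    using bound by (intro cSup_eq_maximum) auto
  with bound zero nonzero show ?thesis by blast
qed

end
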